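(* Let $f$ be continuous on $[0,1]$, and let $w(x):=\int_0^x f(s)\,ds$ and $\overline{w}:=\int_0^1 w(x)\,dx$. Let $n\ge 2$, $h=1/n$, $x_j=jh$ ($j=0,\dots,n$). Let $\mathcal{M}_h$ be the space of continuous functions on $[0,1]$ that are linear on each $[x_{j-1},x_j]$ and vanish at $0$ and $1$, and let $V_h$ be the space of continuous functions on $[0,1]$ that are quadratic on each $[x_{j-1},x_j]$ and vanish at $0$ and $1$. Let $(w_h,u_h)\in V_h\times\mathcal{M}_h$ be the solution of the reduced discrete problem $$\begin{aligned} (w_h',v_h')+(u_h',v_h)&=(f,v_h)&&\text{for all } v_h\in V_h,\\ (w_h,q_h')&=0&&\text{for all } q_h\in\mathcal{M}_h. \end{aligned}$$ Let $\tilde{\mathcal{M}}_h:=\{v_h: v_h \text{ continuous on } [0,1], \text{ linear on each } [x_{j-1},x_j],\ v_h(0)=v_h(1)\}$. Then $u_h-\overline{u}_h$, where $\overline{u}_h=\int_0^1 u_h(x)\,dx$, is the $L^2(0,1)$-orthogonal projection of $w-\overline{w}$ onto $\tilde{\mathcal{M}}_h$.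
   Context: $(\cdot,\cdot)$ denotes the $L^2(0,1)$ inner product. *)

theory Defs
  imports "HOL-Analysis.Analysis"
begin

definition piecewise_poly :: "nat \<Rightarrow> nat \<Rightarrow> (real \<Rightarrow> real) \<Rightarrow> bool" where
  "piecewise_poly n d g \<longleftrightarrow>
     continuous_on {0..1} g \<and>
     (\<forall>j\<in>{1..n}. \<exists>c :: nat \<Rightarrow> real.
        \<forall>x\<in>{(real j - 1) / real n .. real j / real n}. g x = (\<Sum>i\<le>d. c i * x ^ i))"

definition Mh :: "nat \<Rightarrow> (real \<Rightarrow> real) set" where
  "Mh n = {g. piecewise_poly n 1 g \<and> g 0 = 0 \<and> g 1 = 0}"

definition Vh :: "nat \<Rightarrow> (real \<Rightarrow> real) set" where
  "Vh n = {g. piecewise_poly n 2 g \<and> g 0 = 0 \<and> g 1 = 0}"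

definition Mh_tilde :: "nat \<Rightarrow> (real \<Rightarrow> real) set" where
  "Mh_tilde n = {g. piecewise_poly n 1 g \<and> g 0 = g 1}"

definition L2ip :: "(real \<Rightarrow> real) \<Rightarrow> (real \<Rightarrow> real) \<Rightarrow> real" where
  "L2ip f g = integral {0..1} (\<lambda>x. f x * g x)"

definition is_L2_proj :: "(real \<Rightarrow> real) set \<Rightarrow> (real \<Rightarrow> real) \<Rightarrow> (real \<Rightarrow> real) \<Rightarrow> bool" where
  "is_L2_proj S phi P \<longleftrightarrow> P \<in> S \<and> (\<forall>q\<in>S. L2ip (\<lambda>x. phi x - P x) q = 0)"

end

theory Submission
  imports Defs
begin

text \<open>For q in tilde M_h let v be the antiderivative of q - mean q; since q - mean q has
  mean zero, v lies in V_h. Testing the first equation with v and integrating by parts gives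
  (w_h', q - mean q) - (u_h, q - mean q) = -(w, q - mean q). The first term vanishes by the
  second equation, because (w_h', q) = -(w_h, q') and q - q(0) lies in M_h. Hence w - u_h is
  orthogonal to q - mean q, which is the claim since (phi - mean phi, q) = (phi, q - mean q).\<close>

lemma deriv_diff_const: "deriv (\<lambda>x. g x - k) = deriv (g :: real \<Rightarrow> real)"
proof -
  have "((\<lambda>x. g x - k) has_real_derivative D) (at x) \<longleftrightarrow>
      (g has_real_derivative D) (at x)" for D x
  proof
    assume "((\<lambda>x. g x - k) has_real_derivative D) (at x)"
    from DERIV_add[OF this DERIV_const[of k]] show "(g has_real_derivative D) (at x)" by simp
  qed (auto intro!: derivative_eq_intros)
  then show ?thesis unfolding deriv_def by simp
qed

lemma integral_has_real_derivative_interior: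
  assumes "continuous_on {a..b} g" "x \<in> {a<..<b}"
  shows "((\<lambda>x. integral {a..x} g) has_real_derivative g x) (at x)"
  using integral_has_real_derivative[OF assms(1), of x] assms(2) by (simp add: at_within_Icc_at)

definition mesh_nodes :: "nat \<Rightarrow> real set" where
  "mesh_nodes n = (\<lambda>j. real j / real n) ` {..n}"

lemma mesh_cell_containing:
  assumes "n \<ge> 1" "x \<in> {0<..<1} - mesh_nodes n"
  obtains j where "j \<in> {1..n}" "(real j - 1) / real n < x" "x < real j / real n"
proof -
  define k where "k = \<lceil>x * real n\<rceil>"
  have x: "0 < x" "x < 1" "x \<notin> mesh_nodes n" using assms(2) by auto
  have np: "real n > 0" using assms(1) by simp
  have k: "of_int k - 1 < x * real n" "x * real n \<le> of_int k"
    unfolding k_def by linarith+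
  have "0 < x * real n" "x * real n < real n" using x np by simp_all
  with k have kpos: "k > 0" and kn: "k \<le> int n" by linarith+
  have rk: "real (nat k) = real_of_int k" using kpos by simp
  have "x * real n \<noteq> of_int k"
  proof
    assume "x * real n = of_int k"
    then have "x = real (nat k) / real n" using np rk by (simp add: field_simps)
    with kn x(3) show False unfolding mesh_nodes_def by auto
  qed
  with k have "(real (nat k) - 1) / real n < x" "x < real (nat k) / real n"
    using np rk by (simp_all add: field_simps)
  moreover have "nat k \<in> {1..n}" using kpos kn by auto
  ultimately show ?thesis using that by blast
qed

lemma piecewise_poly_continuous_on: "piecewise_poly n d g \<Longrightarrow> continuous_on {0..1} g"
  unfolding piecewise_poly_def by blast

lemma has_real_derivative_poly_on_interval:
  assumes "\<forall>x\<in>{a..b}. g x = (\<Sum>i\<le>d. c i * x ^ i)" "a < y" "y < b"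
  shows "(g has_real_derivative (\<Sum>i\<le>d. c i * (real i * y ^ (i - 1)))) (at y)"
proof -
  have "((\<lambda>x. \<Sum>i\<le>d. c i * x ^ i) has_real_derivative
      (\<Sum>i\<le>d. c i * (real i * y ^ (i - 1)))) (at y)"
    by (auto intro!: derivative_eq_intros simp: mult_ac)
  then show ?thesis
    by (rule has_field_derivative_transform_within_open[where S="{a<..<b}"]) (use assms in auto)
qed

lemma piecewise_poly_has_real_derivative:
  assumes "piecewise_poly n d g" "n \<ge> 1" "x \<in> {0<..<1} - mesh_nodes n"
  shows "(g has_real_derivative deriv g x) (at x)"
proof -
  obtain j where j: "j \<in> {1..n}" "(real j - 1) / real n < x" "x < real j / real n"
    using mesh_cell_containing assms(2,3) by blast
  then obtain c
    where "\<forall>x\<in>{(real j - 1) / real n .. real j / real n}. g x = (\<Sum>i\<le>d. c i * x ^ i)"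
    using assms(1) unfolding piecewise_poly_def by blast
  from has_real_derivative_poly_on_interval[OF this j(2,3)] show ?thesis
    by (metis DERIV_imp_deriv)
qed

lemma integrable_on_mesh_cells:
  fixes F :: "real \<Rightarrow> real"
  assumes "n \<ge> 1"
    and "\<And>j. j \<in> {1..n} \<Longrightarrow> F integrable_on {(real j - 1) / real n .. real j / real n}"
  shows "F integrable_on {0..1}"
proof -
  have "F integrable_on {0 .. real k / real n}" if "k \<le> n" for k
    using that
  proof (induction k)
    case 0
    show ?case using integrable_on_refl[of F 0] by simp
  next
    case (Suc k)
    have "F integrable_on {real k / real n .. real (Suc k) / real n}"
      using assms(2)[of "Suc k"] Suc.prems by simp
    moreover have "0 \<le> real k / real n" "real k / real n \<le> real (Suc k) / real n"
      by (simp_all add: divide_right_mono)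
    ultimately show ?case
      using Suc Henstock_Kurzweil_Integration.integrable_combine[of 0 "real k / real n"]
      by simp
  qed
  from this[of n] show ?thesis using assms(1) by simp
qed

lemma piecewise_poly_deriv_mult_integrable:
  assumes "piecewise_poly n d g" "n \<ge> 1" "continuous_on {0..1} h"
  shows "(\<lambda>x. h x * deriv g x) integrable_on {0..1}"
proof (rule integrable_on_mesh_cells[OF assms(2)])
  fix j assume j: "j \<in> {1..n}"
  define a where "a = (real j - 1) / real n"
  define b where "b = real j / real n"
  have ab: "0 \<le> a" "a \<le> b" "b \<le> 1" using j by (auto simp: a_def b_def divide_simps)
  obtain c where c: "\<forall>x\<in>{a..b}. g x = (\<Sum>i\<le>d. c i * x ^ i)"
    using assms(1) j unfolding piecewise_poly_def a_def b_def by blast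
  define g' where "g' x = (\<Sum>i\<le>d. c i * (real i * x ^ (i - 1)))" for x
  have int: "(\<lambda>x. h x * g' x) integrable_on {a..b}"
    unfolding g'_def using ab
    by (intro integrable_continuous_interval continuous_intros continuous_on_subset[OF assms(3)]) auto
  have eq: "h x * deriv g x = h x * g' x" if "x \<in> {a..b} - {a, b}" for x
  proof -
    have "a < x" "x < b" using that by auto
    from DERIV_imp_deriv[OF has_real_derivative_poly_on_interval[OF c this]]
    show ?thesis by (simp add: g'_def)
  qed
  show "(\<lambda>x. h x * deriv g x) integrable_on {a..b}"
    by (rule integrable_spike_finite[where S="{a, b}", OF _ eq int]) simp_all
qed

lemma piecewise_poly_diff_const:
  assumes "piecewise_poly n d g"
  shows "piecewise_poly n d (\<lambda>x. g x - k)"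
  unfolding piecewise_poly_def
proof (intro conjI ballI)
  show "continuous_on {0..1} (\<lambda>x. g x - k)"
    using piecewise_poly_continuous_on[OF assms] by (intro continuous_intros)
  fix j assume "j \<in> {1..n}"
  then obtain c
    where c: "\<forall>x\<in>{(real j - 1) / real n .. real j / real n}. g x = (\<Sum>i\<le>d. c i * x ^ i)"
    using assms unfolding piecewise_poly_def by blast
  have "(\<Sum>i\<le>d. (c(0 := c 0 - k)) i * x ^ i) = (\<Sum>i\<le>d. c i * x ^ i) - k" for x :: real
  proof -
    have "(\<Sum>i\<le>d. (c(0 := c 0 - k)) i * x ^ i)
        = (\<Sum>i\<le>d. c i * x ^ i - (if i = 0 then k else 0))"
      by (intro sum.cong) auto
    then show ?thesis by (simp add: sum_subtractf)
  qed
  with c show "\<exists>c. \<forall>x\<in>{(real j - 1) / real n .. real j / real n}.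
      g x - k = (\<Sum>i\<le>d. c i * x ^ i)"
    by metis
qed

lemma piecewise_poly_integral:
  fixes r :: "real \<Rightarrow> real"
  assumes "piecewise_poly n d r"
  shows "piecewise_poly n (Suc d) (\<lambda>x. integral {0..x} r)"
  unfolding piecewise_poly_def
proof (intro conjI ballI)
  have rc: "continuous_on {0..1} r" using piecewise_poly_continuous_on[OF assms] .
  then show "continuous_on {0..1} (\<lambda>x. integral {0..x} r)"
    by (intro indefinite_integral_continuous_1 integrable_continuous_interval)
  fix j assume j: "j \<in> {1..n}"
  define a where "a = (real j - 1) / real n"
  define b where "b = real j / real n"
  obtain c where c: "\<forall>x\<in>{a..b}. r x = (\<Sum>i\<le>d. c i * x ^ i)"
    using assms j unfolding piecewise_poly_def a_def b_def by blast
  have ab: "0 \<le> a" "a \<le> b" "b \<le> 1" using j by (auto simp: a_def b_def divide_simps)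
  define P where "P x = (\<Sum>i\<le>d. c i / real (Suc i) * x ^ Suc i)" for x :: real
  define c' where
    "c' i = (case i of 0 \<Rightarrow> integral {0..a} r - P a | Suc k \<Rightarrow> c k / real (Suc k))" for i
  have "integral {0..x} r = (\<Sum>i\<le>Suc d. c' i * x ^ i)" if x: "x \<in> {a..b}" for x
  proof -
    have "integral {0..x} r = integral {0..a} r + integral {a..x} r"
      using x ab
      by (intro Henstock_Kurzweil_Integration.integral_combine[symmetric]
          integrable_continuous_interval continuous_on_subset[OF rc]) auto
    moreover have "integral {a..x} r = integral {a..x} (\<lambda>s. \<Sum>i\<le>d. c i * s ^ i)"
      using c x by (intro integral_cong) auto
    moreover have "((\<lambda>s. \<Sum>i\<le>d. c i * s ^ i) has_integral (P x - P a)) {a..x}"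
    proof (rule fundamental_theorem_of_calculus)
      show "a \<le> x" using x by auto
      fix s
      have "(s ^ i + real i * s ^ (i - 1) * s) * c i / real (Suc i) = c i * s ^ i" for i
        by (cases i) (simp_all add: field_simps)
      then show "(P has_vector_derivative (\<Sum>i\<le>d. c i * s ^ i)) (at s within {a..x})"
        unfolding P_def has_real_derivative_iff_has_vector_derivative[symmetric]
        by (auto intro!: derivative_eq_intros sum.cong simp del: of_nat_Suc)
    qed
    moreover have "(\<Sum>i\<le>Suc d. c' i * x ^ i) = c' 0 + P x"
      by (simp only: sum.atMost_Suc_shift) (simp add: c'_def P_def)
    ultimately show ?thesis
      by (simp add: integral_unique c'_def)
  qed
  then show "\<exists>c. \<forall>x\<in>{(real j - 1) / real n .. real j / real n}.
      integral {0..x} r = (\<Sum>i\<le>Suc d. c i * x ^ i)"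
    unfolding a_def b_def by blast
qed

lemma L2ip_diff_left:
  assumes "continuous_on {0..1} f" "continuous_on {0..1} g" "continuous_on {0..1} h"
  shows "L2ip (\<lambda>x. f x - g x) h = L2ip f h - L2ip g h"
proof -
  have "(\<lambda>x. f x * h x) integrable_on {0..1}" "(\<lambda>x. g x * h x) integrable_on {0..1}"
    using assms by (auto intro!: integrable_continuous_interval continuous_intros)
  then show ?thesis
    unfolding L2ip_def by (simp add: left_diff_distrib integral_diff)
qed

lemma L2ip_diff_mean_swap:
  assumes "continuous_on {0..1} \<phi>" "continuous_on {0..1} q"
  shows "L2ip (\<lambda>x. \<phi> x - integral {0..1} \<phi>) q = L2ip \<phi> (\<lambda>x. q x - integral {0..1} q)"
proof -
  define \<Phi> Q P where "\<Phi> = integral {0..1} \<phi>" and "Q = integral {0..1} q"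
    and "P = integral {0..1} (\<lambda>x. \<phi> x * q x)"
  have int: "((\<lambda>x. \<phi> x * q x) has_integral P) {0..1}" "(\<phi> has_integral \<Phi>) {0..1}"
    "(q has_integral Q) {0..1}"
    unfolding \<Phi>_def Q_def P_def using assms
    by (auto intro!: integrable_integral integrable_continuous_interval continuous_intros)
  have "((\<lambda>x. (\<phi> x - \<Phi>) * q x) has_integral P - \<Phi> * Q) {0..1}"
    using has_integral_diff[OF int(1) has_integral_mult_right[OF int(3), of \<Phi>]]
    by (simp add: algebra_simps)
  moreover have "((\<lambda>x. \<phi> x * (q x - Q)) has_integral P - \<Phi> * Q) {0..1}"
    using has_integral_diff[OF int(1) has_integral_mult_left[OF int(2), of Q]]
    by (simp add: algebra_simps)
  ultimately show ?thesis
    unfolding L2ip_def \<Phi>_def[symmetric] Q_def[symmetric] by (simp add: integral_unique)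
qed

lemma L2ip_by_parts:
  fixes g v g' v' :: "real \<Rightarrow> real"
  assumes "finite S" "continuous_on {0..1} g" "continuous_on {0..1} v"
    and "\<And>x. x \<in> {0<..<1} - S \<Longrightarrow> (g has_real_derivative g' x) (at x)"
    and "\<And>x. x \<in> {0<..<1} - S \<Longrightarrow> (v has_real_derivative v' x) (at x)"
    and "(\<lambda>x. g x * v' x) integrable_on {0..1}"
    and "g 1 * v 1 = g 0 * v 0"
  shows "L2ip g' v = - L2ip g v'"
proof -
  have int: "((\<lambda>x. g x * v' x) has_integral (g 1 * v 1 - g 0 * v 0 - - L2ip g v')) {0..1}"
    using assms(6,7) by (simp add: L2ip_def integrable_integral)
  have "((\<lambda>x. g' x * v x) has_integral - L2ip g v') {0..1}"
    by (rule integration_by_parts_interior_strong[OF bounded_bilinear_mult assms(1) _ assms(2,3) _ _ int])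
       (use assms(4,5) in \<open>auto simp: has_real_derivative_iff_has_vector_derivative\<close>)
  then show ?thesis unfolding L2ip_def by (rule integral_unique)
qed

lemma L2ip_antiderivative_by_parts:
  fixes g g' r :: "real \<Rightarrow> real"
  assumes "finite S" "continuous_on {0..1} g" "continuous_on {0..1} r" "integral {0..1} r = 0"
    and "\<And>x. x \<in> {0<..<1} - S \<Longrightarrow> (g has_real_derivative g' x) (at x)"
  shows "L2ip g' (\<lambda>x. integral {0..x} r) = - L2ip g r"
proof (rule L2ip_by_parts[OF assms(1,2)])
  show "continuous_on {0..1} (\<lambda>x. integral {0..x} r)"
    using assms(3) by (intro indefinite_integral_continuous_1 integrable_continuous_interval)
  show "((\<lambda>x. integral {0..x} r) has_real_derivative r x) (at x)" if "x \<in> {0<..<1} - S" for x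
    using integral_has_real_derivative_interior[OF assms(3)] that by blast
  show "(\<lambda>x. g x * r x) integrable_on {0..1}"
    using assms(2,3) by (intro integrable_continuous_interval continuous_intros)
qed (use assms(4,5) in simp_all)

lemma antiderivative_diff_mean_in_Vh:
  assumes "piecewise_poly n 1 q"
  shows "(\<lambda>x. integral {0..x} (\<lambda>s. q s - integral {0..1} q)) \<in> Vh n"
proof -
  have "piecewise_poly n (Suc 1) (\<lambda>x. integral {0..x} (\<lambda>s. q s - integral {0..1} q))"
    by (intro piecewise_poly_integral piecewise_poly_diff_const assms)
  moreover have "((\<lambda>s. q s - integral {0..1} q) has_integral 0) {0..1}"
    using has_integral_diff[OF integrable_integral has_integral_const_real[of "integral {0..1} q" 0 1],
        OF integrable_continuous_interval[OF piecewise_poly_continuous_on[OF assms]]]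
    by simp
  ultimately show ?thesis
    unfolding Vh_def by (simp add: numeral_2_eq_2 integral_unique)
qed

lemma L2ip_deriv_Mh_tilde_diff_const_eq_0:
  assumes "n \<ge> 1" "piecewise_poly n d g" "g 0 = 0" "g 1 = 0"
    and orth: "\<And>p. p \<in> Mh n \<Longrightarrow> L2ip g (deriv p) = 0"
    and "q \<in> Mh_tilde n"
  shows "L2ip (deriv g) (\<lambda>x. q x - k) = 0"
proof -
  have q: "piecewise_poly n 1 q" "q 0 = q 1" using assms(6) by (auto simp: Mh_tilde_def)
  have "(\<lambda>x. q x - q 0) \<in> Mh n"
    using piecewise_poly_diff_const[OF q(1)] q(2) by (simp add: Mh_def)
  then have "L2ip g (deriv q) = 0" using orth deriv_diff_const by metis
  moreover have "L2ip (deriv g) (\<lambda>x. q x - k) = - L2ip g (deriv q)"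
  proof (rule L2ip_by_parts[where S="mesh_nodes n"])
    show "(\<lambda>x. g x * deriv q x) integrable_on {0..1}"
      using piecewise_poly_deriv_mult_integrable[OF q(1) assms(1) piecewise_poly_continuous_on[OF assms(2)]] .
    show "((\<lambda>x. q x - k) has_real_derivative deriv q x) (at x)" if "x \<in> {0<..<1} - mesh_nodes n" for x
      using piecewise_poly_has_real_derivative[OF piecewise_poly_diff_const[OF q(1)] assms(1) that]
      by (simp add: deriv_diff_const)
  qed (use assms(3,4) piecewise_poly_has_real_derivative[OF assms(2,1)]
         piecewise_poly_continuous_on[OF assms(2)]
         piecewise_poly_continuous_on[OF piecewise_poly_diff_const[OF q(1)]]
         in \<open>simp_all add: mesh_nodes_def\<close>)
  ultimately show ?thesis by simp
qed

lemma reduced_discrete_problem_orthogonality: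
  fixes f w wh uh q :: "real \<Rightarrow> real"
  assumes f_cont: "continuous_on {0..1} f"
    and w_def: "\<And>x. w x = integral {0..x} f"
    and "n \<ge> 1" "wh \<in> Vh n" "uh \<in> Mh n"
    and eq1: "\<And>vh. vh \<in> Vh n \<Longrightarrow>
               L2ip (deriv wh) (deriv vh) + L2ip (deriv uh) vh = L2ip f vh"
    and eq2: "\<And>qh. qh \<in> Mh n \<Longrightarrow> L2ip wh (deriv qh) = 0"
    and q: "q \<in> Mh_tilde n"
  shows "L2ip w (\<lambda>x. q x - integral {0..1} q) = L2ip uh (\<lambda>x. q x - integral {0..1} q)"
proof -
  have wh: "piecewise_poly n 2 wh" "wh 0 = 0" "wh 1 = 0" using assms(4) by (auto simp: Vh_def)
  have uh: "piecewise_poly n 1 uh" using assms(5) by (simp add: Mh_def)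
  have w_eq: "w = (\<lambda>x. integral {0..x} f)" using w_def by auto
  have qp: "piecewise_poly n 1 q" using q by (simp add: Mh_tilde_def)
  define r where "r x = q x - integral {0..1} q" for x
  define v where "v x = integral {0..x} r" for x
  have v: "v \<in> Vh n"
    unfolding v_def[abs_def] r_def[abs_def] using antiderivative_diff_mean_in_Vh[OF qp] .
  then have r0: "integral {0..1} r = 0" by (simp add: Vh_def v_def)
  have rc: "continuous_on {0..1} r"
    using piecewise_poly_continuous_on[OF qp] unfolding r_def by (intro continuous_intros)
  have "L2ip (deriv wh) (deriv v) = L2ip (deriv wh) r"
    unfolding L2ip_def v_def[abs_def]
    using DERIV_imp_deriv[OF integral_has_real_derivative_interior[OF rc]]
    by (intro integral_spike[of "{0, 1}"]) auto
  also have "\<dots> = 0"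
    unfolding r_def using L2ip_deriv_Mh_tilde_diff_const_eq_0[OF assms(3) wh eq2 q] .
  finally have "L2ip (deriv wh) (deriv v) = 0" .
  moreover have "L2ip (deriv uh) v = - L2ip uh r"
    unfolding v_def[abs_def]
    by (rule L2ip_antiderivative_by_parts[where S="mesh_nodes n",
          OF _ piecewise_poly_continuous_on[OF uh] rc r0
          piecewise_poly_has_real_derivative[OF uh assms(3)]])
       (simp add: mesh_nodes_def)
  moreover have "L2ip f v = - L2ip w r"
    unfolding v_def[abs_def] w_eq
    by (rule L2ip_antiderivative_by_parts[OF finite.emptyI _ rc r0
          integral_has_real_derivative_interior[OF f_cont]])
       (use f_cont in
         \<open>auto intro: indefinite_integral_continuous_1 integrable_continuous_interval\<close>)
  ultimately show ?thesis
    using eq1[OF v] unfolding r_def by simp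
qed

theorem theorem3p3:
  fixes f w wh uh :: "real \<Rightarrow> real" and wbar :: real and n :: nat
  assumes f_cont: "continuous_on {0..1} f"
    and w_def: "\<And>x. w x = integral {0..x} f"
    and wbar_def: "wbar = integral {0..1} w"
    and n2: "n \<ge> 2"
    and wh_in: "wh \<in> Vh n"
    and uh_in: "uh \<in> Mh n"
    and eq1: "\<And>vh. vh \<in> Vh n \<Longrightarrow>
               L2ip (deriv wh) (deriv vh) + L2ip (deriv uh) vh = L2ip f vh"
    and eq2: "\<And>qh. qh \<in> Mh n \<Longrightarrow> L2ip wh (deriv qh) = 0"
  shows "is_L2_proj (Mh_tilde n) (\<lambda>x. w x - wbar)
           (\<lambda>x. uh x - integral {0..1} uh)"
proof -
  have n1: "n \<ge> 1" using n2 by simp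
  have uh: "piecewise_poly n 1 uh" "uh 0 = 0" "uh 1 = 0" using uh_in by (auto simp: Mh_def)
  have uhc: "continuous_on {0..1} uh" using piecewise_poly_continuous_on[OF uh(1)] .
  have wc: "continuous_on {0..1} w"
    using f_cont by (simp add: w_def indefinite_integral_continuous_1 integrable_continuous_interval)
  have mean_diff: "integral {0..1} (\<lambda>x. w x - uh x) = wbar - integral {0..1} uh"
    unfolding wbar_def using wc uhc by (simp add: integral_diff integrable_continuous_interval)
  have "L2ip (\<lambda>x. w x - wbar - (uh x - integral {0..1} uh)) q = 0" if q: "q \<in> Mh_tilde n" for q
  proof -
    have qc: "continuous_on {0..1} q"
      using q piecewise_poly_continuous_on by (auto simp: Mh_tilde_def)
    have "L2ip (\<lambda>x. w x - wbar - (uh x - integral {0..1} uh)) q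
        = L2ip (\<lambda>x. (w x - uh x) - integral {0..1} (\<lambda>x. w x - uh x)) q"
      by (simp add: mean_diff algebra_simps)
    also have "\<dots> = L2ip (\<lambda>x. w x - uh x) (\<lambda>x. q x - integral {0..1} q)"
      using wc uhc qc by (intro L2ip_diff_mean_swap continuous_intros)
    also have "\<dots> = 0"
      using reduced_discrete_problem_orthogonality[OF f_cont w_def n1 wh_in uh_in eq1 eq2 q]
        L2ip_diff_left[OF wc uhc] qc by (simp add: continuous_intros)
    finally show ?thesis .
  qed
  moreover have "(\<lambda>x. uh x - integral {0..1} uh) \<in> Mh_tilde n"
    using piecewise_poly_diff_const[OF uh(1)] uh by (simp add: Mh_tilde_def)
  ultimately show ?thesis
    unfolding is_L2_proj_def by simp
qed

end
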